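(* Let $L$ and $K$ be finite-dimensional Lie superalgebras over a field $\mathbb{F}$ of characteristic different from $2$ and $3$, with $\dim L=\dim K$. Then $L$ and $K$ are isoclinic if and only if $L\cong K$.
   Context: A Lie superalgebra is a $\mathbb{Z}_2$-graded vector space $L=L_{\bar 0}\oplus L_{\bar 1}$ with a bilinear bracket satisfying $[L_\alpha,L_\beta]\subseteq L_{\alpha+\beta}$, graded skew-symmetry and the graded Jacobi identity. Homomorphisms are even (degree-preserving) linear maps preserving the bracket. $Z(L)=\{z\in L:[z,x]=0\ \forall x\in L\}$ is the center and $L'=[L,L]$ the derived superalgebra. Lie superalgebras $L$ and $M$ are isoclinic, written $L\sim M$, if there are Lie superalgebra isomorphisms $\varphi:L/Z(L)\to M/Z(M)$ and $\theta:L'\to M'$ such that $\theta([l,m])=[k,r]$ for all $l,m\in L$ and all $k,r\in M$ with $k+Z(M)=\varphi(l+Z(L))$ and $r+Z(M)=\varphi(m+Z(L))$. Dimension means superdimension $(\dim L_{\bar0}\mid\dim L_{\bar1})$. *)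

theory Defs
  imports Complex_Main
begin

text \<open>A Lie superalgebra over a field 'k is modelled on the whole of a type 'v
  (an abelian group), equipped with a scalar multiplication, a bracket, and
  the even and odd homogeneous subspaces.\<close>

record ('k, 'v) lsa =
  sc  :: "'k \<Rightarrow> 'v \<Rightarrow> 'v"
  br  :: "'v \<Rightarrow> 'v \<Rightarrow> 'v"
  ev  :: "'v set"
  od  :: "'v set"

definition homog :: "('k, 'v, 'm) lsa_scheme \<Rightarrow> 'v \<Rightarrow> bool" where
  "homog A x \<longleftrightarrow> x \<in> ev A \<or> x \<in> od A"

definition psign :: "('k::field, 'v, 'm) lsa_scheme \<Rightarrow> 'v \<Rightarrow> 'v \<Rightarrow> 'k" where
  "psign A x y = (if x \<in> od A \<and> y \<in> od A then -1 else 1)"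

definition lie_superalgebra :: "('k::field, 'v::ab_group_add, 'm) lsa_scheme \<Rightarrow> bool" where
  "lie_superalgebra A \<longleftrightarrow>
     vector_space (sc A) \<and>
     module.subspace (sc A) (ev A) \<and> module.subspace (sc A) (od A) \<and>
     ev A \<inter> od A = {0} \<and> (\<forall>x. \<exists>a\<in>ev A. \<exists>b\<in>od A. x = a + b) \<and>
     (\<forall>x y z. br A (x + y) z = br A x z + br A y z) \<and>
     (\<forall>x y z. br A x (y + z) = br A x y + br A x z) \<and>
     (\<forall>c x y. br A (sc A c x) y = sc A c (br A x y)) \<and>
     (\<forall>c x y. br A x (sc A c y) = sc A c (br A x y)) \<and>
     (\<forall>x\<in>ev A. \<forall>y\<in>ev A. br A x y \<in> ev A) \<and>
     (\<forall>x\<in>ev A. \<forall>y\<in>od A. br A x y \<in> od A) \<and>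
     (\<forall>x\<in>od A. \<forall>y\<in>ev A. br A x y \<in> od A) \<and>
     (\<forall>x\<in>od A. \<forall>y\<in>od A. br A x y \<in> ev A) \<and>
     (\<forall>x y. homog A x \<longrightarrow> homog A y \<longrightarrow>
        br A x y = - sc A (psign A x y) (br A y x)) \<and>
     (\<forall>x y z. homog A x \<longrightarrow> homog A y \<longrightarrow> homog A z \<longrightarrow>
        br A x (br A y z) = br A (br A x y) z + sc A (psign A x y) (br A y (br A x z)))"

definition fin_dim :: "('k::field, 'v::ab_group_add, 'm) lsa_scheme \<Rightarrow> bool" where
  "fin_dim A \<longleftrightarrow> (\<exists>B. finite B \<and> module.span (sc A) B = UNIV)"

definition sdim :: "('k::field, 'v::ab_group_add, 'm) lsa_scheme \<Rightarrow> nat \<times> nat" where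
  "sdim A = (vector_space.dim (sc A) (ev A), vector_space.dim (sc A) (od A))"

definition center :: "('k, 'v::zero, 'm) lsa_scheme \<Rightarrow> 'v set" where
  "center A = {z. \<forall>x. br A z x = 0}"

definition derived :: "('k::field, 'v::ab_group_add, 'm) lsa_scheme \<Rightarrow> 'v set" where
  "derived A = module.span (sc A) {br A x y | x y. True}"

definition lsa_iso :: "('k::field, 'v::ab_group_add, 'm) lsa_scheme \<Rightarrow>
    ('k, 'w::ab_group_add, 'n) lsa_scheme \<Rightarrow> ('v \<Rightarrow> 'w) \<Rightarrow> bool" where
  "lsa_iso A B f \<longleftrightarrow> bij f \<and> Vector_Spaces.linear (sc A) (sc B) f \<and>
     f ` ev A \<subseteq> ev B \<and> f ` od A \<subseteq> od B \<and>
     (\<forall>x y. f (br A x y) = br B (f x) (f y))"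

definition lsa_isomorphic (infix "\<cong>\<^sub>L" 50) where
  "A \<cong>\<^sub>L B \<longleftrightarrow> (\<exists>f. lsa_iso A B f)"

text \<open>Quotient L/Z(L): its elements are the cosets x + Z(L); operations on cosets are
  defined through representatives.\<close>
definition zcos :: "('k, 'v::ab_group_add, 'm) lsa_scheme \<Rightarrow> 'v \<Rightarrow> 'v set" where
  "zcos A x = (\<lambda>z. x + z) ` center A"

definition zquot :: "('k, 'v::ab_group_add, 'm) lsa_scheme \<Rightarrow> 'v set set" where
  "zquot A = range (zcos A)"

definition quot_iso :: "('k::field, 'v::ab_group_add, 'm) lsa_scheme \<Rightarrow>
    ('k, 'w::ab_group_add, 'n) lsa_scheme \<Rightarrow> ('v set \<Rightarrow> 'w set) \<Rightarrow> bool" where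
  "quot_iso A B \<phi> \<longleftrightarrow> bij_betw \<phi> (zquot A) (zquot B) \<and>
     (\<forall>x y u v. \<phi> (zcos A x) = zcos B u \<longrightarrow> \<phi> (zcos A y) = zcos B v \<longrightarrow>
        \<phi> (zcos A (x + y)) = zcos B (u + v) \<and>
        \<phi> (zcos A (br A x y)) = zcos B (br B u v)) \<and>
     (\<forall>c x u. \<phi> (zcos A x) = zcos B u \<longrightarrow> \<phi> (zcos A (sc A c x)) = zcos B (sc B c u)) \<and>
     (\<forall>x\<in>ev A. \<exists>u\<in>ev B. \<phi> (zcos A x) = zcos B u) \<and>
     (\<forall>x\<in>od A. \<exists>u\<in>od B. \<phi> (zcos A x) = zcos B u)"

definition derived_iso :: "('k::field, 'v::ab_group_add, 'm) lsa_scheme \<Rightarrow>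
    ('k, 'w::ab_group_add, 'n) lsa_scheme \<Rightarrow> ('v \<Rightarrow> 'w) \<Rightarrow> bool" where
  "derived_iso A B \<theta> \<longleftrightarrow> bij_betw \<theta> (derived A) (derived B) \<and>
     (\<forall>x\<in>derived A. \<forall>y\<in>derived A. \<theta> (x + y) = \<theta> x + \<theta> y \<and>
         \<theta> (br A x y) = br B (\<theta> x) (\<theta> y)) \<and>
     (\<forall>c. \<forall>x\<in>derived A. \<theta> (sc A c x) = sc B c (\<theta> x)) \<and>
     \<theta> ` (derived A \<inter> ev A) \<subseteq> ev B \<and> \<theta> ` (derived A \<inter> od A) \<subseteq> od B"

definition isoclinic :: "('k::field, 'v::ab_group_add, 'm) lsa_scheme \<Rightarrow>
    ('k, 'w::ab_group_add, 'n) lsa_scheme \<Rightarrow> bool" where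
  "isoclinic A B \<longleftrightarrow> (\<exists>\<phi> \<theta>. quot_iso A B \<phi> \<and> derived_iso A B \<theta> \<and>
     (\<forall>l m k r. zcos B k = \<phi> (zcos A l) \<longrightarrow> zcos B r = \<phi> (zcos A m) \<longrightarrow>
        \<theta> (br A l m) = br B k r))"

end

theory Submission
  imports Defs
begin

text \<open>Given an isoclinism \<open>(\<phi>, \<theta>)\<close>, we build a linear bijection \<open>F : L \<rightarrow> K\<close> that
  preserves the grading, lifts \<open>\<phi>\<close> (i.e. \<open>F x + Z(K) = \<phi>(x + Z(L))\<close>) and extends \<open>\<theta>\<close>; the
  compatibility of \<open>\<phi>\<close> and \<open>\<theta>\<close> then gives \<open>F [x,y] = \<theta> [x,y] = [F x, F y]\<close>.
  \<open>F\<close> is built on each homogeneous component \<open>L\<^sub>i\<close>, where \<open>\<phi>\<close> is a linear isomorphism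
  \<open>L\<^sub>i / Z(L)\<^sub>i \<cong> K\<^sub>i / Z(K)\<^sub>i\<close>: take \<open>\<theta>\<close> on \<open>L' \<inter> L\<^sub>i\<close>, an arbitrary lift of \<open>\<phi>\<close> on a
  complement of \<open>L' \<inter> L\<^sub>i + Z(L)\<^sub>i\<close>, and on the remaining basis vectors, which lie in
  \<open>Z(L)\<^sub>i\<close>, an injection into a complement of \<open>\<theta>(L' \<inter> L\<^sub>i)\<close> in \<open>\<theta>(L' \<inter> L\<^sub>i) + Z(K)\<^sub>i\<close>.
  That injection exists, and the resulting injective map is onto, because
  \<open>dim L\<^sub>i = dim K\<^sub>i\<close>.\<close>

context vector_space_pair begin

lemma construct_preserves_rel:
  assumes B: "vs1.independent B" and x: "x \<in> vs1.span B"
    and R0: "R 0 0"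
    and Radd: "\<And>x y u v. R x u \<Longrightarrow> R y v \<Longrightarrow> R (x + y) (u + v)"
    and Rscale: "\<And>x u c. R x u \<Longrightarrow> R (c *a x) (c *b u)"
    and Rbasis: "\<And>b. b \<in> B \<Longrightarrow> R b (f b)"
  shows "R x (construct B f x)"
proof (rule vs1.span_induct[OF x])
  have lin: "Vector_Spaces.linear s1 s2 (construct B f)" using linear_construct[OF B] .
  show "vs1.subspace {x. R x (construct B f x)}"
    unfolding vs1.subspace_def
    using R0 Radd Rscale linear_0[OF lin] linear_add[OF lin] linear_scale[OF lin] by auto
qed (use Rbasis construct_basis[OF B] in simp)

lemma linear_extension_from_subspace:
  assumes S: "vs1.subspace S"
    and add: "\<And>x y. x \<in> S \<Longrightarrow> y \<in> S \<Longrightarrow> h (x + y) = h x + h y"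
    and scale: "\<And>c x. x \<in> S \<Longrightarrow> h (c *a x) = c *b h x"
  obtains g where "Vector_Spaces.linear s1 s2 g" "\<And>x. x \<in> S \<Longrightarrow> g x = h x"
proof -
  obtain B where B: "B \<subseteq> S" "vs1.independent B" "S \<subseteq> vs1.span B"
    using vs1.basis_exists[of S] by metis
  have "x \<in> S \<and> construct B h x = h x" if x: "x \<in> S" for x
  proof (rule construct_preserves_rel[OF B(2), where R = "\<lambda>x u. x \<in> S \<and> u = h x"])
    show "x \<in> vs1.span B" using x B(3) by blast
    show "0 \<in> S \<and> 0 = h 0" using add[of 0 0] vs1.subspace_0[OF S] by simp
  qed (use B(1) add scale vs1.subspace_add[OF S] vs1.subspace_scale[OF S] in auto)
  then show ?thesis using that linear_construct[OF B(2)] by blast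
qed

end

context finite_dimensional_vector_space_pair begin

lemma inj_on_span_if_independent_image:
  assumes f: "Vector_Spaces.linear s1 s2 f"
    and indep: "vs2.independent (f ` X)" and inj: "inj_on f X"
  shows "inj_on f (vs1.span X)"
proof -
  have "finite X"
    using vs2.finiteI_independent[OF indep] inj finite_imageD by blast
  then show ?thesis
    using linear_indep_image_lemma[OF f _ indep inj]
    by (simp add: linear_inj_on_iff_eq_0[OF f vs1.subspace_span])
qed

end

text \<open>\<open>R x u\<close> says that \<open>u + ZW = \<Phi> (x + Z)\<close> for a linear isomorphism
  \<open>\<Phi> : V / Z \<rightarrow> W / ZW\<close>; the quotients themselves are never formed.\<close>

locale quotient_iso_on_reps = finite_dimensional_vector_space_pair s1 B1 s2 B2
  for s1 :: "'a::field \<Rightarrow> 'b::ab_group_add \<Rightarrow> 'b" (infixr \<open>*a\<close> 75) and B1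
    and s2 :: "'a \<Rightarrow> 'c::ab_group_add \<Rightarrow> 'c" (infixr \<open>*b\<close> 75) and B2 +
  fixes V Z :: "'b set" and W ZW :: "'c set" and R :: "'b \<Rightarrow> 'c \<Rightarrow> bool"
  assumes subspace_V: "vs1.subspace V" and subspace_Z: "vs1.subspace Z" and Z_subset: "Z \<subseteq> V"
    and subspace_W: "vs2.subspace W" and ZW_subset: "ZW \<subseteq> W"
    and dim_eq: "vs1.dim V = vs2.dim W"
    and rel_add: "\<And>x y u v. R x u \<Longrightarrow> R y v \<Longrightarrow> R (x + y) (u + v)"
    and rel_scale: "\<And>x u c. R x u \<Longrightarrow> R (c *a x) (c *b u)"
    and rel_diff: "\<And>x u u'. R x u \<Longrightarrow> R x u' \<Longrightarrow> u \<in> W \<Longrightarrow> u' \<in> W \<Longrightarrow> u' - u \<in> ZW"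
    and rel_shift: "\<And>x u z. R x u \<Longrightarrow> z \<in> ZW \<Longrightarrow> R x (u + z)"
    and rel_zero_iff: "\<And>x. x \<in> V \<Longrightarrow> R x 0 \<longleftrightarrow> x \<in> Z"
    and rel_total: "\<And>x. x \<in> V \<Longrightarrow> \<exists>u\<in>W. R x u"
    and rel_surj: "\<And>u. u \<in> W \<Longrightarrow> \<exists>x\<in>V. R x u"
begin

lemma construct_lift:
  assumes B: "vs1.independent B" and x: "x \<in> vs1.span B"
    and q: "\<And>b. b \<in> B \<Longrightarrow> q b \<in> W \<and> R b (q b)"
  shows "construct B q x \<in> W \<and> R x (construct B q x)"
proof (rule construct_preserves_rel[OF B x, where R = "\<lambda>x u. u \<in> W \<and> R x u"])
  show "0 \<in> W \<and> R 0 0"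
    using rel_zero_iff vs1.subspace_0[OF subspace_Z] vs2.subspace_0[OF subspace_W] Z_subset by blast
qed (use q rel_add rel_scale vs2.subspace_add[OF subspace_W] vs2.subspace_scale[OF subspace_W] in auto)

lemma linear_lift_exists:
  obtains g where "Vector_Spaces.linear s1 s2 g" "\<And>x. x \<in> V \<Longrightarrow> g x \<in> W \<and> R x (g x)"
proof -
  obtain B where B: "B \<subseteq> V" "vs1.independent B" "V \<subseteq> vs1.span B"
    using vs1.basis_exists[of V] by metis
  define q where "q b = (SOME u. u \<in> W \<and> R b u)" for b
  have q: "q b \<in> W \<and> R b (q b)" if "b \<in> B" for b
    unfolding q_def by (rule someI_ex) (use rel_total that B(1) in blast)
  show ?thesis
  proof (rule that)
    show "Vector_Spaces.linear s1 s2 (construct B q)" by (rule linear_construct[OF B(2)])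
    fix x assume "x \<in> V"
    then show "construct B q x \<in> W \<and> R x (construct B q x)"
      using construct_lift[OF B(2) _ q] B(3) by blast
  qed
qed

lemma lift_in_span_Un_ZW:
  assumes X: "X \<subseteq> V" and h: "\<And>x. x \<in> X \<Longrightarrow> h x \<in> W \<and> R x (h x)"
    and x: "x \<in> X \<union> Z" and u: "u \<in> W" "R x u"
  shows "u \<in> vs2.span (h ` X \<union> ZW)"
proof (cases "x \<in> X")
  case True
  then have hx: "h x \<in> W" "R x (h x)" using h by auto
  have "h x \<in> vs2.span (h ` X \<union> ZW)" by (rule vs2.span_base) (use True in blast)
  moreover have "u - h x \<in> vs2.span (h ` X \<union> ZW)"
    by (rule vs2.span_base) (use rel_diff[OF hx(2) u(2) hx(1) u(1)] in blast)
  ultimately have "h x + (u - h x) \<in> vs2.span (h ` X \<union> ZW)" by (rule vs2.span_add)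
  then show ?thesis by simp
next
  case False
  then have "R x 0" using x rel_zero_iff Z_subset by blast
  then have "u - 0 \<in> ZW" using rel_diff[OF _ u(2) _ u(1)] vs2.subspace_0[OF subspace_W] by blast
  then show ?thesis by (intro vs2.span_base) simp
qed

lemma W_subset_span_lift_Un_ZW:
  assumes g: "Vector_Spaces.linear s1 s2 g" "\<And>x. x \<in> V \<Longrightarrow> g x \<in> W \<and> R x (g x)"
    and B: "V \<subseteq> vs1.span B"
  shows "W \<subseteq> vs2.span (g ` B \<union> ZW)"
proof
  fix w assume w: "w \<in> W"
  obtain x where x: "x \<in> V" "R x w" using rel_surj[OF w] by blast
  have "w - g x \<in> vs2.span (g ` B \<union> ZW)"
    by (rule vs2.span_base) (use rel_diff[OF _ x(2)] g(2)[OF x(1)] w in blast)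
  moreover have "g x \<in> vs2.span (g ` B)"
    using x(1) B unfolding linear_span_image[OF g(1)] by blast
  then have "g x \<in> vs2.span (g ` B \<union> ZW)" using vs2.span_mono[of "g ` B"] by blast
  ultimately have "g x + (w - g x) \<in> vs2.span (g ` B \<union> ZW)" by (rule vs2.span_add[rotated])
  then show "w \<in> vs2.span (g ` B \<union> ZW)" by simp
qed

lemma dim_Un_Z_le:
  assumes X: "X \<subseteq> V" and h: "\<And>x. x \<in> X \<Longrightarrow> h x \<in> W \<and> R x (h x)"
  shows "vs1.dim (X \<union> Z) \<le> vs2.dim (h ` X \<union> ZW)"
proof -
  obtain g where g: "Vector_Spaces.linear s1 s2 g" "\<And>x. x \<in> V \<Longrightarrow> g x \<in> W \<and> R x (g x)"
    using linear_lift_exists by blast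
  obtain B where B: "B \<subseteq> X \<union> Z" "vs1.independent B" "X \<union> Z \<subseteq> vs1.span B"
      "card B = vs1.dim (X \<union> Z)"
    using vs1.basis_exists by metis
  obtain B' where B': "B \<subseteq> B'" "B' \<subseteq> V" "vs1.independent B'" "V \<subseteq> vs1.span B'"
    using vs1.maximal_independent_subset_extend[OF _ B(2), of V] B(1) X Z_subset by blast
  obtain D where D: "D \<subseteq> h ` X \<union> ZW" "h ` X \<union> ZW \<subseteq> vs2.span D"
      "card D = vs2.dim (h ` X \<union> ZW)" "vs2.independent D"
    using vs2.basis_exists by metis
  have fin: "finite B'" "finite D" using B'(3) D(4) vs1.finiteI_independent vs2.finiteI_independent by simp_all
  let ?U = "B' - B"
  have "vs2.span (h ` X \<union> ZW) \<subseteq> vs2.span D"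
    using D(2) by (rule vs2.span_minimal[OF _ vs2.subspace_span])
  moreover have "g b \<in> vs2.span (h ` X \<union> ZW)" if "b \<in> B" for b
  proof -
    have b: "b \<in> X \<union> Z" "b \<in> V" using that B(1) X Z_subset by blast+
    show ?thesis using lift_in_span_Un_ZW[OF X h b(1)] g(2)[OF b(2)] by blast
  qed
  ultimately have gB: "g ` B \<subseteq> vs2.span D" by blast
  have span_D: "vs2.span D \<subseteq> vs2.span (D \<union> g ` ?U)" by (rule vs2.span_mono) blast
  have "g ` B' \<union> ZW \<subseteq> vs2.span D \<union> g ` ?U" using gB D(2) by blast
  also have "\<dots> \<subseteq> vs2.span (D \<union> g ` ?U)"
    using span_D vs2.span_superset[of "D \<union> g ` ?U"] by blast
  finally have "g ` B' \<union> ZW \<subseteq> vs2.span (D \<union> g ` ?U)" .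
  then have "vs2.span (g ` B' \<union> ZW) \<subseteq> vs2.span (D \<union> g ` ?U)"
    by (rule vs2.span_minimal[OF _ vs2.subspace_span])
  moreover have "W \<subseteq> vs2.span (g ` B' \<union> ZW)"
    using g B'(4) by (rule W_subset_span_lift_Un_ZW)
  ultimately have "W \<subseteq> vs2.span (D \<union> g ` ?U)" by (rule subset_trans[rotated])
  then have "vs2.dim W \<le> card (D \<union> g ` ?U)" using vs2.dim_le_card fin by blast
  also have "\<dots> \<le> card D + card ?U"
    using card_Un_le[of D "g ` ?U"] card_image_le[of ?U g] fin(1) by simp
  finally have "vs2.dim W \<le> card D + card ?U" .
  moreover have "vs1.dim V = card B + card ?U"
  proof -
    have "finite B" using fin(1) B'(1) finite_subset by blast
    then have "card B' = card B + card ?U"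
      using card_Un_disjoint[of B ?U] B'(1) fin(1) by (simp add: Un_absorb1)
    then show ?thesis using vs1.basis_card_eq_dim[OF B'(2,4,3)] by simp
  qed
  ultimately show ?thesis using B(4) D(3) dim_eq by linarith
qed

lemma injection_into_ZW:
  assumes S: "vs1.subspace S" "S \<subseteq> V"
    and h: "Vector_Spaces.linear s1 s2 h" "inj_on h S"
    and h_lift: "\<And>x. x \<in> S \<Longrightarrow> h x \<in> W \<and> R x (h x)"
    and BS: "BS \<subseteq> S" "vs1.independent BS" "S \<subseteq> vs1.span BS"
    and A: "A \<subseteq> Z" "vs1.independent (BS \<union> A)" "BS \<inter> A = {}" "Z \<subseteq> vs1.span (BS \<union> A)"
  obtains j where "j ` A \<subseteq> ZW" "inj_on j A" "vs2.independent (h ` BS \<union> j ` A)"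
    "h ` BS \<inter> j ` A = {}"
proof -
  define T where "T = h ` BS"
  have "inj_on h (vs1.span BS)" using h(2) vs1.span_subspace[OF BS(1,3) S(1)] by simp
  then have T: "vs2.independent T"
    unfolding T_def by (rule linear_independent_injective_image[OF h(1) BS(2)])
  have card_T: "card T = card BS"
    unfolding T_def by (rule card_image[OF inj_on_subset[OF h(2) BS(1)]])
  obtain T' where T': "T \<subseteq> T'" "T' \<subseteq> T \<union> ZW" "vs2.independent T'" "T \<union> ZW \<subseteq> vs2.span T'"
    using vs2.maximal_independent_subset_extend[of T "T \<union> ZW"] T by blast
  have fin: "finite (BS \<union> A)" "finite T'"
    using vs1.finiteI_independent[OF A(2)] vs2.finiteI_independent[OF T'(3)] .
  have "vs1.dim (BS \<union> Z) \<le> vs2.dim (T \<union> ZW)"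
    unfolding T_def using BS(1) S(2) h_lift by (intro dim_Un_Z_le) blast+
  moreover have "card (BS \<union> A) = vs1.dim (BS \<union> Z)"
  proof (rule vs1.basis_card_eq_dim)
    show "BS \<union> A \<subseteq> BS \<union> Z" using A(1) by blast
    show "BS \<union> Z \<subseteq> vs1.span (BS \<union> A)" using A(4) vs1.span_superset[of "BS \<union> A"] by blast
  qed (rule A(2))
  moreover have "card T' = vs2.dim (T \<union> ZW)" by (rule vs2.basis_card_eq_dim[OF T'(2,4,3)])
  moreover have "card (BS \<union> A) = card BS + card A"
    using card_Un_disjoint[OF _ _ A(3)] fin(1) by simp
  moreover have "card T' = card T + card (T' - T)"
    using card_Un_disjoint[of T "T' - T"] fin(2) finite_subset[OF T'(1)] T'(1)
    by (simp add: Un_absorb1)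
  ultimately have "card A \<le> card (T' - T)" using card_T by linarith
  then obtain j where j: "j ` A \<subseteq> T' - T" "inj_on j A"
    using card_le_inj[of A "T' - T"] fin by auto
  show ?thesis
  proof (rule that)
    show "j ` A \<subseteq> ZW" using j(1) T'(2) by blast
    have "h ` BS \<union> j ` A \<subseteq> T'" using j(1) T'(1) unfolding T_def by blast
    then show "vs2.independent (h ` BS \<union> j ` A)" by (rule vs2.independent_mono[OF T'(3)])
    show "h ` BS \<inter> j ` A = {}" using j(1) unfolding T_def by blast
  qed (rule j(2))
qed

lemma lift_extension_on_basis:
  assumes h: "Vector_Spaces.linear s1 s2 h" "inj_on h BS"
    and h_lift: "\<And>b. b \<in> BS \<Longrightarrow> h b \<in> W \<and> R b (h b)"
    and B: "BS \<union> A \<subseteq> B" "B \<subseteq> V" "vs1.independent B" "V \<subseteq> vs1.span B"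
    and A: "A \<subseteq> Z" "BS \<inter> A = {}"
    and j: "j ` A \<subseteq> ZW" "inj_on j A" "vs2.independent (h ` BS \<union> j ` A)" "h ` BS \<inter> j ` A = {}"
  obtains f where "Vector_Spaces.linear s1 s2 f" "\<And>x. x \<in> V \<Longrightarrow> f x \<in> W \<and> R x (f x)"
    "\<And>x. x \<in> vs1.span BS \<Longrightarrow> f x = h x" "inj_on f (vs1.span (BS \<union> A))"
proof -
  obtain g where g: "\<And>x. x \<in> V \<Longrightarrow> g x \<in> W \<and> R x (g x)"
    using linear_lift_exists by blast
  define q where "q b = (if b \<in> BS then h b else if b \<in> A then j b else g b)" for b
  have q: "q b \<in> W \<and> R b (q b)" if "b \<in> B" for b
  proof (cases "b \<in> A - BS")
    case True
    then have "R b 0" using A(1) rel_zero_iff Z_subset by blast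
    then show ?thesis using True j(1) rel_shift[of b 0 "j b"] ZW_subset unfolding q_def by auto
  qed (use that h_lift g B(2) in \<open>auto simp: q_def\<close>)
  define f where "f = construct B q"
  have lin: "Vector_Spaces.linear s1 s2 f" unfolding f_def by (rule linear_construct[OF B(3)])
  have f_BS: "f b = h b" if "b \<in> BS" for b
    using that construct_basis[OF B(3)] B(1) unfolding f_def q_def by auto
  have f_A: "f b = j b" if "b \<in> A" for b
  proof -
    have "b \<in> B" "b \<notin> BS" using that B(1) A(2) by blast+
    then show ?thesis using that construct_basis[OF B(3)] unfolding f_def q_def by simp
  qed
  have "inj_on f (vs1.span (BS \<union> A))"
  proof (rule inj_on_span_if_independent_image[OF lin])
    have "f ` (BS \<union> A) = h ` BS \<union> j ` A" using f_BS f_A by (metis image_Un image_cong)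
    then show "vs2.independent (f ` (BS \<union> A))" using j(3) by simp
    have "inj_on f BS" using h(2) f_BS inj_on_cong by blast
    moreover have "inj_on f A" using j(2) f_A inj_on_cong by blast
    moreover have "f ` BS \<inter> f ` A = {}" using j(4) f_BS f_A by (metis image_cong)
    moreover have "BS - A = BS" "A - BS = A" using A(2) by blast+
    ultimately show "inj_on f (BS \<union> A)" by (simp add: inj_on_Un)
  qed
  moreover have "f x \<in> W \<and> R x (f x)" if "x \<in> V" for x
    using construct_lift[OF B(3) _ q] B(4) that unfolding f_def by blast
  moreover have "f x = h x" if "x \<in> vs1.span BS" for x
    using linear_eq_on[OF lin h(1) that] f_BS by blast
  ultimately show ?thesis using that[OF lin] by blast
qed

lemma lift_extension_inj_on_Z:
  assumes S: "vs1.subspace S" "S \<subseteq> V"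
    and h: "Vector_Spaces.linear s1 s2 h" "inj_on h S"
    and h_lift: "\<And>x. x \<in> S \<Longrightarrow> h x \<in> W \<and> R x (h x)"
  obtains f where "Vector_Spaces.linear s1 s2 f" "\<And>x. x \<in> V \<Longrightarrow> f x \<in> W \<and> R x (f x)"
    "\<And>x. x \<in> S \<Longrightarrow> f x = h x" "inj_on f Z"
proof -
  obtain BS where BS: "BS \<subseteq> S" "vs1.independent BS" "S \<subseteq> vs1.span BS"
    using vs1.basis_exists[of S] by metis
  obtain B where B: "BS \<subseteq> B" "B \<subseteq> BS \<union> Z" "vs1.independent B" "BS \<union> Z \<subseteq> vs1.span B"
    using vs1.maximal_independent_subset_extend[of BS "BS \<union> Z"] BS(2) by blast
  have "B \<subseteq> V" using B(2) BS(1) S(2) Z_subset by blast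
  then obtain B' where B': "B \<subseteq> B'" "B' \<subseteq> V" "vs1.independent B'" "V \<subseteq> vs1.span B'"
    using vs1.maximal_independent_subset_extend[OF _ B(3)] by blast
  let ?A = "B - BS"
  have B_eq: "B = BS \<union> ?A" using B(1) by blast
  have A: "?A \<subseteq> Z" "BS \<inter> ?A = {}" using B(2) by blast+
  obtain j where j: "j ` ?A \<subseteq> ZW" "inj_on j ?A" "vs2.independent (h ` BS \<union> j ` ?A)"
      "h ` BS \<inter> j ` ?A = {}"
    using injection_into_ZW[OF S h h_lift BS A(1) _ A(2)] B(3,4) B_eq by auto
  obtain f where f: "Vector_Spaces.linear s1 s2 f" "\<And>x. x \<in> V \<Longrightarrow> f x \<in> W \<and> R x (f x)"
    "\<And>x. x \<in> vs1.span BS \<Longrightarrow> f x = h x" "inj_on f (vs1.span (BS \<union> ?A))"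
    using lift_extension_on_basis[OF h(1) inj_on_subset[OF h(2) BS(1)] _ _ B'(2-4) A j] h_lift BS(1)
      B'(1) B_eq by blast
  show ?thesis
    using that[OF f(1,2)] f(3) BS(3) inj_on_subset[OF f(4)] B(4) B_eq by auto
qed

lemma extends_to_isomorphism:
  assumes S: "vs1.subspace S" "S \<subseteq> V"
    and h: "Vector_Spaces.linear s1 s2 h" "inj_on h S"
    and h_lift: "\<And>x. x \<in> S \<Longrightarrow> h x \<in> W \<and> R x (h x)"
  obtains f where "Vector_Spaces.linear s1 s2 f" "f ` V = W" "inj_on f V"
    "\<And>x. x \<in> V \<Longrightarrow> R x (f x)" "\<And>x. x \<in> S \<Longrightarrow> f x = h x"
proof -
  obtain f where f: "Vector_Spaces.linear s1 s2 f" "\<And>x. x \<in> V \<Longrightarrow> f x \<in> W \<and> R x (f x)"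
    "\<And>x. x \<in> S \<Longrightarrow> f x = h x" "inj_on f Z"
    using lift_extension_inj_on_Z[OF S h h_lift] by blast
  have inj: "inj_on f V"
    unfolding linear_inj_on_iff_eq_0[OF f(1) subspace_V]
  proof (intro ballI impI)
    fix x assume x: "x \<in> V" "f x = 0"
    then have "x \<in> Z" using f(2) rel_zero_iff by metis
    then show "x = 0"
      using f(4) x(2) linear_0[OF f(1)] vs1.subspace_0[OF subspace_Z] unfolding inj_on_def by metis
  qed
  have "f ` V = W"
  proof (rule vs2.subspace_dim_equal)
    show "vs2.subspace (f ` V)" using linear_subspace_image[OF f(1) subspace_V] .
    show "f ` V \<subseteq> W" using f(2) by blast
    show "vs2.dim W \<le> vs2.dim (f ` V)"
      using dim_image_eq[OF f(1)] inj subspace_V dim_eq by (simp add: vs1.span_eq_iff[THEN iffD2])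
  qed (rule subspace_W)
  then show ?thesis using that f inj by blast
qed

end

locale lie_superalg =
  fixes A :: "('k::field, 'v::ab_group_add, 'm) lsa_scheme"
  assumes lie_superalgebra: "lie_superalgebra A"
begin

sublocale vector_space "sc A"
  using lie_superalgebra unfolding lie_superalgebra_def by blast

lemma ev_subspace: "subspace (ev A)"
  using lie_superalgebra unfolding lie_superalgebra_def by (elim conjE)

lemma od_subspace: "subspace (od A)"
  using lie_superalgebra unfolding lie_superalgebra_def by (elim conjE)

lemma ev_inter_od: "ev A \<inter> od A = {0}"
  using lie_superalgebra unfolding lie_superalgebra_def by (elim conjE)

lemma ev_od_decomp:
  obtains a b where "a \<in> ev A" "b \<in> od A" "x = a + b"
proof -
  have "\<forall>x. \<exists>a\<in>ev A. \<exists>b\<in>od A. x = a + b"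
    using lie_superalgebra unfolding lie_superalgebra_def by (elim conjE)
  then show ?thesis using that by blast
qed

lemma br_add_left: "br A (x + y) z = br A x z + br A y z"
  using lie_superalgebra unfolding lie_superalgebra_def by (elim conjE) meson

lemma br_add_right: "br A x (y + z) = br A x y + br A x z"
  using lie_superalgebra unfolding lie_superalgebra_def by (elim conjE) meson

lemma br_scale_left: "br A (sc A c x) y = sc A c (br A x y)"
  using lie_superalgebra unfolding lie_superalgebra_def by (elim conjE) meson

lemma br_ev_ev: "x \<in> ev A \<Longrightarrow> y \<in> ev A \<Longrightarrow> br A x y \<in> ev A"
  using lie_superalgebra unfolding lie_superalgebra_def by (elim conjE) meson

lemma br_ev_od: "x \<in> ev A \<Longrightarrow> y \<in> od A \<Longrightarrow> br A x y \<in> od A"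
  using lie_superalgebra unfolding lie_superalgebra_def by (elim conjE) meson

lemma br_od_ev: "x \<in> od A \<Longrightarrow> y \<in> ev A \<Longrightarrow> br A x y \<in> od A"
  using lie_superalgebra unfolding lie_superalgebra_def by (elim conjE) meson

lemma br_od_od: "x \<in> od A \<Longrightarrow> y \<in> od A \<Longrightarrow> br A x y \<in> ev A"
  using lie_superalgebra unfolding lie_superalgebra_def by (elim conjE) meson

lemma br_skew: "homog A x \<Longrightarrow> homog A y \<Longrightarrow> br A x y = - sc A (psign A x y) (br A y x)"
  using lie_superalgebra unfolding lie_superalgebra_def by (elim conjE) meson

lemma br_zero_left: "br A 0 x = 0"
  using br_add_left[of 0 0 x] by simp

lemma graded_decomp_unique:
  assumes "a \<in> ev A" "b \<in> od A" "a' \<in> ev A" "b' \<in> od A" "a + b = a' + b'"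
  shows "a = a'" "b = b'"
proof -
  have "a - a' = b' - b" using assms(5) by (simp add: algebra_simps)
  moreover have "a - a' \<in> ev A" "b' - b \<in> od A"
    using subspace_diff ev_subspace od_subspace assms(1-4) by blast+
  ultimately have "a - a' = 0" using ev_inter_od by (metis IntI singletonD)
  then show "a = a'" "b = b'" using assms(5) by simp_all
qed

lemma subspace_center: "subspace (center A)"
  unfolding subspace_def center_def using br_zero_left br_add_left br_scale_left by simp

lemma graded_sum_eq_zero:
  assumes "a \<in> ev A" "b \<in> od A" "a + b = 0"
  shows "a = 0" "b = 0"
  using graded_decomp_unique[OF assms(1,2) subspace_0[OF ev_subspace] subspace_0[OF od_subspace]]
    assms(3) by simp_all

lemma br_eq_zero_if_homog:
  assumes "\<And>y. y \<in> ev A \<Longrightarrow> br A x y = 0" "\<And>y. y \<in> od A \<Longrightarrow> br A x y = 0"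
  shows "br A x y = 0"
proof -
  obtain c d where "c \<in> ev A" "d \<in> od A" "y = c + d" using ev_od_decomp .
  then show ?thesis using assms br_add_right by simp
qed

lemma center_components:
  assumes z: "z \<in> center A" "z = a + b" and ab: "a \<in> ev A" "b \<in> od A"
  shows "a \<in> center A" "b \<in> center A"
proof -
  have sum: "br A a y + br A b y = 0" for y using z br_add_left by (simp add: center_def)
  have ev: "br A a y = 0 \<and> br A b y = 0" if "y \<in> ev A" for y
    using graded_sum_eq_zero[OF br_ev_ev[OF ab(1) that] br_od_ev[OF ab(2) that] sum] by simp
  have od: "br A a y = 0 \<and> br A b y = 0" if "y \<in> od A" for y
    using graded_sum_eq_zero[OF br_od_od[OF ab(2) that] br_ev_od[OF ab(1) that]] sum[of y]
    by (simp add: add.commute)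
  have "br A a y = 0" "br A b y = 0" for y
    by (rule br_eq_zero_if_homog; use ev od in blast)+
  then show "a \<in> center A" "b \<in> center A" unfolding center_def by simp_all
qed

lemma br_center_right:
  assumes "z \<in> center A"
  shows "br A x z = 0"
proof -
  obtain a b where ab: "a \<in> ev A" "b \<in> od A" "z = a + b" using ev_od_decomp .
  have central: "a \<in> center A" "b \<in> center A" using center_components[OF assms ab(3) ab(1,2)] .
  have skew_zero: "br A y w = 0" if "homog A y" "homog A w" "w \<in> center A" for y w
    using br_skew[OF that(1,2)] that(3) by (simp add: center_def)
  have homog_zero: "br A y z = 0" if "homog A y" for y
    using skew_zero[OF that _ central(1)] skew_zero[OF that _ central(2)] ab br_add_right
    by (simp add: homog_def)
  obtain c d where "c \<in> ev A" "d \<in> od A" "x = c + d" using ev_od_decomp .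
  then show ?thesis using homog_zero br_add_left by (simp add: homog_def)
qed

lemma br_eq_mod_center:
  assumes "u - u' \<in> center A" "v - v' \<in> center A"
  shows "br A u v = br A u' v'"
proof -
  have "br A u v = br A u' v' + br A u' (v - v') + br A (u - u') v"
    using br_add_left[of u' "u - u'" v] br_add_right[of u' v' "v - v'"] by simp
  moreover have "br A u' (v - v') = 0" using br_center_right[OF assms(2)] .
  moreover have "br A (u - u') v = 0" using assms(1) unfolding center_def by simp
  ultimately show ?thesis by simp
qed

lemma zcos_eq_iff: "zcos A u = zcos A v \<longleftrightarrow> u - v \<in> center A"
proof
  assume "zcos A u = zcos A v"
  moreover have "u \<in> zcos A u"
    unfolding zcos_def using subspace_0[OF subspace_center] by force
  ultimately obtain z where "z \<in> center A" "u = v + z" unfolding zcos_def by auto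
  then show "u - v \<in> center A" by simp
next
  assume uv: "u - v \<in> center A"
  have "zcos A u = (\<lambda>z. v + z) ` ((\<lambda>z. (u - v) + z) ` center A)"
    unfolding zcos_def image_image by (simp add: algebra_simps)
  also have "(\<lambda>z. (u - v) + z) ` center A = center A"
  proof
    show "(\<lambda>z. (u - v) + z) ` center A \<subseteq> center A"
      using uv subspace_add[OF subspace_center] by blast
    show "center A \<subseteq> (\<lambda>z. (u - v) + z) ` center A"
    proof
      fix z assume "z \<in> center A"
      then have "z - (u - v) \<in> center A" using uv subspace_diff[OF subspace_center] by blast
      then show "z \<in> (\<lambda>z. (u - v) + z) ` center A" by (rule rev_image_eqI) simp
    qed
  qed
  finally show "zcos A u = zcos A v" unfolding zcos_def .
qed

lemma subspace_derived: "subspace (derived A)"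
  unfolding derived_def by (rule subspace_span)

lemma br_in_derived: "br A x y \<in> derived A"
  unfolding derived_def by (rule span_base) blast

lemma derived_graded:
  assumes "x \<in> derived A"
  obtains a b where "a \<in> derived A \<inter> ev A" "b \<in> derived A \<inter> od A" "x = a + b"
proof -
  let ?G = "{a + b | a b. a \<in> derived A \<inter> ev A \<and> b \<in> derived A \<inter> od A}"
  have "br A u v \<in> ?G" for u v
  proof -
    obtain a b where ab: "a \<in> ev A" "b \<in> od A" "u = a + b" using ev_od_decomp .
    obtain c d where cd: "c \<in> ev A" "d \<in> od A" "v = c + d" using ev_od_decomp .
    have "br A u v = (br A a c + br A b d) + (br A a d + br A b c)"
      using ab(3) cd(3) br_add_left br_add_right by (simp add: algebra_simps)
    moreover have "br A a c + br A b d \<in> derived A \<inter> ev A"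
      using subspace_add[OF subspace_derived br_in_derived br_in_derived]
        subspace_add[OF ev_subspace br_ev_ev[OF ab(1) cd(1)] br_od_od[OF ab(2) cd(2)]] by blast
    moreover have "br A a d + br A b c \<in> derived A \<inter> od A"
      using subspace_add[OF subspace_derived br_in_derived br_in_derived]
        subspace_add[OF od_subspace br_ev_od[OF ab(1) cd(2)] br_od_ev[OF ab(2) cd(1)]] by blast
    ultimately show ?thesis by blast
  qed
  then have "derived A \<subseteq> ?G"
    unfolding derived_def
    by (intro span_minimal subspace_sums subspace_inter ev_subspace od_subspace subspace_span) blast
  then show ?thesis using assms that by blast
qed

lemma finite_dimensional_if_fin_dim:
  assumes "fin_dim A"
  obtains B where "finite_dimensional_vector_space (sc A) B"
proof -
  obtain F where F: "finite F" "span F = UNIV" using assms unfolding fin_dim_def by blast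
  obtain B where B: "B \<subseteq> F" "independent B" "F \<subseteq> span B"
    using maximal_independent_subset[of F] by blast
  have "span B = UNIV" using F(2) span_minimal[OF B(3) subspace_span] by blast
  moreover have "finite B" using finite_subset[OF B(1) F(1)] .
  ultimately have "finite_dimensional_vector_space (sc A) B" using B(2) by unfold_locales
  then show ?thesis by (rule that)
qed

definition ev_part :: "'v \<Rightarrow> 'v" where
  "ev_part x = (SOME a. a \<in> ev A \<and> x - a \<in> od A)"

lemma ev_part_eq:
  assumes "a \<in> ev A" "b \<in> od A"
  shows "ev_part (a + b) = a"
proof -
  have "\<exists>a'. a' \<in> ev A \<and> (a + b) - a' \<in> od A" using assms by auto
  then have "ev_part (a + b) \<in> ev A" "(a + b) - ev_part (a + b) \<in> od A"
    unfolding ev_part_def by (metis (mono_tags, lifting) someI_ex)+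
  then show ?thesis using graded_decomp_unique(1)[OF assms] by (metis add.commute diff_add_cancel)
qed

end

locale lie_superalg_pair = L: lie_superalg L + K: lie_superalg K
  for L :: "('k::field, 'a::ab_group_add, 'm) lsa_scheme"
    and K :: "('k, 'b::ab_group_add, 'n) lsa_scheme"
begin

sublocale vector_space_pair "sc L" "sc K" ..

definition graded_map :: "('a \<Rightarrow> 'b) \<Rightarrow> ('a \<Rightarrow> 'b) \<Rightarrow> 'a \<Rightarrow> 'b" where
  "graded_map fe fo x = fe (L.ev_part x) + fo (x - L.ev_part x)"

lemma graded_map_eq: "a \<in> ev L \<Longrightarrow> b \<in> od L \<Longrightarrow> graded_map fe fo (a + b) = fe a + fo b"
  unfolding graded_map_def by (simp add: L.ev_part_eq)

lemma linear_graded_map: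
  assumes fe: "Vector_Spaces.linear (sc L) (sc K) fe" and fo: "Vector_Spaces.linear (sc L) (sc K) fo"
  shows "Vector_Spaces.linear (sc L) (sc K) (graded_map fe fo)"
  unfolding Vector_Spaces.linear_iff
proof (intro conjI allI)
  fix x y c
  obtain a b where x: "a \<in> ev L" "b \<in> od L" "x = a + b" using L.ev_od_decomp .
  obtain a' b' where y: "a' \<in> ev L" "b' \<in> od L" "y = a' + b'" using L.ev_od_decomp .
  have "graded_map fe fo ((a + a') + (b + b')) = fe (a + a') + fo (b + b')"
    by (intro graded_map_eq L.subspace_add[OF L.ev_subspace] L.subspace_add[OF L.od_subspace]
        x(1,2) y(1,2))
  moreover have "x + y = (a + a') + (b + b')" using x(3) y(3) by (simp add: algebra_simps)
  ultimately have "graded_map fe fo (x + y) = fe (a + a') + fo (b + b')" by simp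
  then show "graded_map fe fo (x + y) = graded_map fe fo x + graded_map fe fo y"
    using graded_map_eq x y linear_add[OF fe] linear_add[OF fo] by (simp add: algebra_simps)
  have "graded_map fe fo (sc L c a + sc L c b) = fe (sc L c a) + fo (sc L c b)"
    by (intro graded_map_eq L.subspace_scale[OF L.ev_subspace] L.subspace_scale[OF L.od_subspace]
        x(1,2))
  moreover have "sc L c x = sc L c a + sc L c b" using x(3) L.scale_right_distrib by simp
  ultimately have "graded_map fe fo (sc L c x) = fe (sc L c a) + fo (sc L c b)" by simp
  then show "graded_map fe fo (sc L c x) = sc K c (graded_map fe fo x)"
    using graded_map_eq x linear_scale[OF fe] linear_scale[OF fo] K.scale_right_distrib by simp
qed (unfold_locales)

lemma graded_map_exists:
  assumes fe: "Vector_Spaces.linear (sc L) (sc K) fe" "fe ` ev L = ev K" "inj_on fe (ev L)"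
    and fo: "Vector_Spaces.linear (sc L) (sc K) fo" "fo ` od L = od K" "inj_on fo (od L)"
  obtains F where "Vector_Spaces.linear (sc L) (sc K) F" "bij F"
    "\<And>x. x \<in> ev L \<Longrightarrow> F x = fe x" "\<And>x. x \<in> od L \<Longrightarrow> F x = fo x"
proof
  let ?F = "graded_map fe fo"
  show lin: "Vector_Spaces.linear (sc L) (sc K) ?F" using linear_graded_map[OF fe(1) fo(1)] .
  show "?F a = fe a" if "a \<in> ev L" for a
    using graded_map_eq[OF that L.subspace_0[OF L.od_subspace]] linear_0[OF fo(1)] by simp
  show "?F b = fo b" if "b \<in> od L" for b
    using graded_map_eq[OF L.subspace_0[OF L.ev_subspace] that] linear_0[OF fe(1)] by simp
  have "inj ?F"
    unfolding linear_inj_iff_eq_0[OF lin]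
  proof (intro allI impI)
    fix x assume "?F x = 0"
    obtain a b where x: "a \<in> ev L" "b \<in> od L" "x = a + b" using L.ev_od_decomp .
    have "fe a \<in> ev K" "fo b \<in> od K" using x(1,2) fe(2) fo(2) by blast+
    then have "fe a = 0" "fo b = 0"
      using K.graded_sum_eq_zero \<open>?F x = 0\<close> graded_map_eq[OF x(1,2)] x(3) by metis+
    then have "a = 0" "b = 0"
      using x(1,2) fe(3) fo(3) linear_0[OF fe(1)] linear_0[OF fo(1)]
        L.subspace_0[OF L.ev_subspace] L.subspace_0[OF L.od_subspace] unfolding inj_on_def by metis+
    then show "x = 0" using x(3) by simp
  qed
  moreover have "y \<in> range ?F" for y
  proof -
    obtain c d where y: "c \<in> ev K" "d \<in> od K" "y = c + d" using K.ev_od_decomp .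
    then obtain a b where "a \<in> ev L" "b \<in> od L" "c = fe a" "d = fo b"
      using fe(2) fo(2) by blast
    then show ?thesis using graded_map_eq y(3) by (metis rangeI)
  qed
  ultimately show "bij ?F" unfolding bij_def by blast
qed

context
  fixes f assumes iso: "lsa_iso L K f"
begin

lemma lsa_iso_linear: "Vector_Spaces.linear (sc L) (sc K) f"
  and lsa_iso_bij: "bij f"
  and lsa_iso_br: "f (br L x y) = br K (f x) (f y)"
  using iso unfolding lsa_iso_def by simp_all

lemma lsa_iso_inv: "f (inv f y) = y"
  using lsa_iso_bij by (simp add: bij_is_surj surj_f_inv_f)

lemma center_image: "f ` center L = center K"
proof (intro equalityI subsetI)
  fix w assume "w \<in> f ` center L"
  then obtain z where z: "z \<in> center L" "w = f z" by blast
  have "br K w y = f (br L z (inv f y))" for y using z(2) lsa_iso_br lsa_iso_inv by simp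
  then show "w \<in> center K" using z(1) linear_0[OF lsa_iso_linear] by (simp add: center_def)
next
  fix y assume y: "y \<in> center K"
  have "f (br L (inv f y) x) = f 0" for x
    using y lsa_iso_br lsa_iso_inv linear_0[OF lsa_iso_linear] by (simp add: center_def)
  then have "inv f y \<in> center L"
    using bij_is_inj[OF lsa_iso_bij] by (simp add: center_def inj_eq)
  then show "y \<in> f ` center L" using lsa_iso_inv by (metis imageI)
qed

lemma zcos_image: "f ` zcos L x = zcos K (f x)"
proof -
  have "f ` zcos L x = (\<lambda>w. f x + w) ` (f ` center L)"
    unfolding zcos_def image_image using linear_add[OF lsa_iso_linear] by simp
  then show ?thesis unfolding center_image zcos_def .
qed

lemma image_zcos_eq_iff: "f ` zcos L x = zcos K u \<longleftrightarrow> f x - u \<in> center K"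
  unfolding zcos_image K.zcos_eq_iff ..

lemma quot_iso_image: "quot_iso L K ((`) f)"
  unfolding quot_iso_def image_zcos_eq_iff
proof (intro conjI allI impI ballI)
  show "bij_betw ((`) f) (zquot L) (zquot K)"
    unfolding bij_betw_def
  proof
    show "inj_on ((`) f) (zquot L)"
      using inj_image_eq_iff[OF bij_is_inj[OF lsa_iso_bij]] by (simp add: inj_on_def)
    have "(`) f ` zquot L = zcos K ` range f" unfolding zquot_def image_image zcos_image ..
    then show "(`) f ` zquot L = zquot K" unfolding zquot_def using bij_is_surj[OF lsa_iso_bij] by simp
  qed
next
  fix x y u v assume xu: "f x - u \<in> center K" and yv: "f y - v \<in> center K"
  have "f (x + y) - (u + v) = (f x - u) + (f y - v)"
    using linear_add[OF lsa_iso_linear] by (simp add: algebra_simps)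
  then show "f (x + y) - (u + v) \<in> center K"
    using K.subspace_add[OF K.subspace_center xu yv] by (simp only:)
  show "f (br L x y) - br K u v \<in> center K"
    using K.br_eq_mod_center[OF xu yv] lsa_iso_br K.subspace_0[OF K.subspace_center] by simp
next
  fix c x u assume "f x - u \<in> center K"
  then have "sc K c (f x - u) \<in> center K" by (rule K.subspace_scale[OF K.subspace_center])
  then show "f (sc L c x) - sc K c u \<in> center K"
    using linear_scale[OF lsa_iso_linear] by (simp add: K.scale_right_diff_distrib)
next
  fix x assume "x \<in> ev L"
  then show "\<exists>u\<in>ev K. f x - u \<in> center K"
    using iso K.subspace_0[OF K.subspace_center] unfolding lsa_iso_def by (intro bexI[of _ "f x"]) auto
next
  fix x assume "x \<in> od L"
  then show "\<exists>u\<in>od K. f x - u \<in> center K"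
    using iso K.subspace_0[OF K.subspace_center] unfolding lsa_iso_def by (intro bexI[of _ "f x"]) auto
qed

lemma derived_image: "f ` derived L = derived K"
proof -
  have "f ` {br L x y | x y. True} = {br K u v | u v. True}"
    using lsa_iso_br lsa_iso_inv by (auto simp: image_iff) metis
  then show ?thesis unfolding derived_def linear_span_image[OF lsa_iso_linear, symmetric] by simp
qed

lemma derived_iso_restrict: "derived_iso L K f"
  unfolding derived_iso_def
proof (intro conjI ballI allI)
  show "bij_betw f (derived L) (derived K)"
    unfolding bij_betw_def using derived_image inj_on_subset[OF bij_is_inj[OF lsa_iso_bij]] by blast
  show "f ` (derived L \<inter> ev L) \<subseteq> ev K" "f ` (derived L \<inter> od L) \<subseteq> od K"
    using iso unfolding lsa_iso_def by blast+
qed (simp_all add: linear_add[OF lsa_iso_linear] linear_scale[OF lsa_iso_linear] lsa_iso_br)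

end

lemma isoclinic_if_isomorphic:
  assumes "L \<cong>\<^sub>L K"
  shows "isoclinic L K"
proof -
  obtain f where iso: "lsa_iso L K f" using assms unfolding lsa_isomorphic_def by blast
  show ?thesis
    unfolding isoclinic_def
  proof (intro exI conjI allI impI)
    show "quot_iso L K ((`) f)" by (rule quot_iso_image[OF iso])
    show "derived_iso L K f" by (rule derived_iso_restrict[OF iso])
    fix l m k r assume "zcos K k = f ` zcos L l" "zcos K r = f ` zcos L m"
    then have "f l - k \<in> center K" "f m - r \<in> center K"
      unfolding eq_commute[of "zcos K _"] image_zcos_eq_iff[OF iso] .
    then have "br K (f l) (f m) = br K k r" by (rule K.br_eq_mod_center)
    then show "f (br L l m) = br K k r" using lsa_iso_br[OF iso] by simp
  qed

qed

end

locale isoclinism = lie_superalg_pair L K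
  for L :: "('k::field, 'a::ab_group_add, 'm) lsa_scheme"
    and K :: "('k, 'b::ab_group_add, 'n) lsa_scheme" +
  fixes \<phi> :: "'a set \<Rightarrow> 'b set" and \<theta> :: "'a \<Rightarrow> 'b"
  assumes quot_iso: "quot_iso L K \<phi>" and derived_iso: "derived_iso L K \<theta>"
    and compatible: "\<And>l m k r. zcos K k = \<phi> (zcos L l) \<Longrightarrow> zcos K r = \<phi> (zcos L m) \<Longrightarrow>
      \<theta> (br L l m) = br K k r"
begin

definition rep :: "'a \<Rightarrow> 'b \<Rightarrow> bool" where
  "rep x u \<longleftrightarrow> \<phi> (zcos L x) = zcos K u"

lemma rep_add: "rep x u \<Longrightarrow> rep y v \<Longrightarrow> rep (x + y) (u + v)"
  and rep_br: "rep x u \<Longrightarrow> rep y v \<Longrightarrow> rep (br L x y) (br K u v)"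
  and rep_scale: "rep x u \<Longrightarrow> rep (sc L c x) (sc K c u)"
  and rep_ev: "x \<in> ev L \<Longrightarrow> \<exists>u\<in>ev K. rep x u"
  and rep_od: "x \<in> od L \<Longrightarrow> \<exists>u\<in>od K. rep x u"
  using quot_iso unfolding rep_def quot_iso_def by blast+

lemma rep_iff_center: "rep x u \<Longrightarrow> rep x u' \<longleftrightarrow> u - u' \<in> center K"
  unfolding rep_def using K.zcos_eq_iff by metis

lemma quot_iso_bij: "bij_betw \<phi> (zquot L) (zquot K)"
  using quot_iso unfolding quot_iso_def by (elim conjE)

lemma rep_exists: "\<exists>u. rep x u"
proof -
  have "\<phi> (zcos L x) \<in> zquot K"
    by (rule bij_betw_apply[OF quot_iso_bij]) (simp add: zquot_def)
  then show ?thesis unfolding rep_def zquot_def by auto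
qed

lemma rep_surj: "\<exists>x. rep x u"
proof -
  have "zcos K u \<in> \<phi> ` zquot L"
    using bij_betw_imp_surj_on[OF quot_iso_bij] by (simp add: zquot_def)
  then show ?thesis unfolding rep_def zquot_def by auto
qed

lemma rep_zero_zero: "rep 0 0"
proof -
  obtain u where "rep 0 u" using rep_exists by blast
  then have "rep (sc L 0 0) (sc K 0 u)" by (rule rep_scale)
  then show ?thesis by simp
qed

lemma rep_zero_iff: "rep x 0 \<longleftrightarrow> x \<in> center L"
proof
  assume "rep x 0"
  then have "\<phi> (zcos L x) = \<phi> (zcos L 0)" using rep_zero_zero unfolding rep_def by simp
  then have "zcos L x = zcos L 0"
    using bij_betw_imp_inj_on[OF quot_iso_bij] unfolding inj_on_def zquot_def by blast
  then show "x \<in> center L" using L.zcos_eq_iff by simp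
next
  assume "x \<in> center L"
  then have "zcos L x = zcos L 0" using L.zcos_eq_iff by simp
  then show "rep x 0" using rep_zero_zero unfolding rep_def by simp
qed

lemma rep_graded_decomp:
  obtains a b ua ub where "a \<in> ev L" "b \<in> od L" "ua \<in> ev K" "ub \<in> od K"
    "rep a ua" "rep b ub" "u - (ua + ub) \<in> center K"
proof -
  obtain x where x: "rep x u" using rep_surj by blast
  obtain a b where ab: "a \<in> ev L" "b \<in> od L" "x = a + b" using L.ev_od_decomp .
  obtain ua where ua: "ua \<in> ev K" "rep a ua" using rep_ev[OF ab(1)] by blast
  obtain ub where ub: "ub \<in> od K" "rep b ub" using rep_od[OF ab(2)] by blast
  have "rep x (ua + ub)" using rep_add[OF ua(2) ub(2)] ab(3) by simp
  then have "u - (ua + ub) \<in> center K" using rep_iff_center x by blast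
  then show ?thesis using that ab(1,2) ua ub by blast
qed

lemma rep_surj_ev: "u \<in> ev K \<Longrightarrow> \<exists>x\<in>ev L. rep x u"
  and rep_surj_od: "u \<in> od K \<Longrightarrow> \<exists>x\<in>od L. rep x u"
proof -
  obtain a b ua ub where ab: "a \<in> ev L" "b \<in> od L" "ua \<in> ev K" "ub \<in> od K"
    "rep a ua" "rep b ub" and z: "u - (ua + ub) \<in> center K"
    using rep_graded_decomp .
  have shift: "rep y w" if "rep y w'" "w - w' \<in> center K" for y w w'
    using rep_iff_center[OF that(1)] K.subspace_neg[OF K.subspace_center that(2)] by simp
  show "\<exists>x\<in>ev L. rep x u" if "u \<in> ev K"
  proof -
    have "u - ua \<in> center K"
      using K.center_components(1)[OF z _ K.subspace_diff[OF K.ev_subspace that ab(3)]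
          K.subspace_neg[OF K.od_subspace ab(4)]] by (simp add: algebra_simps)
    then show ?thesis using shift ab(1,5) by blast
  qed
  show "\<exists>x\<in>od L. rep x u" if "u \<in> od K"
  proof -
    have "u - ub \<in> center K"
      using K.center_components(2)[OF z _ K.subspace_neg[OF K.ev_subspace ab(3)]
          K.subspace_diff[OF K.od_subspace that ab(4)]] by (simp add: algebra_simps)
    then show ?thesis using shift ab(2,6) by blast
  qed
qed

lemma derived_iso_add: "x \<in> derived L \<Longrightarrow> y \<in> derived L \<Longrightarrow> \<theta> (x + y) = \<theta> x + \<theta> y"
  and derived_iso_scale: "x \<in> derived L \<Longrightarrow> \<theta> (sc L c x) = sc K c (\<theta> x)"
  using derived_iso unfolding derived_iso_def by (elim conjE; meson)+

lemma derived_iso_inj: "inj_on \<theta> (derived L)"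
  using derived_iso unfolding derived_iso_def bij_betw_def by (elim conjE)

lemma derived_iso_ev: "x \<in> derived L \<inter> ev L \<Longrightarrow> \<theta> x \<in> ev K"
  and derived_iso_od: "x \<in> derived L \<inter> od L \<Longrightarrow> \<theta> x \<in> od K"
  using derived_iso unfolding derived_iso_def by (elim conjE; blast)+

lemma rep_derived:
  assumes "x \<in> derived L"
  shows "rep x (\<theta> x)"
proof -
  have "x \<in> derived L \<and> rep x (\<theta> x)"
  proof (rule L.span_induct[OF assms[unfolded derived_def]])
    have "0 \<in> derived L" unfolding derived_def by (rule L.span_zero)
    then have "\<theta> 0 = 0" using derived_iso_add[of 0 0] by simp
    then show "L.subspace {x. x \<in> derived L \<and> rep x (\<theta> x)}"
      unfolding L.subspace_def using \<open>0 \<in> derived L\<close> rep_zero_zero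
        L.subspace_add[OF L.subspace_derived] L.subspace_scale[OF L.subspace_derived]
        derived_iso_add derived_iso_scale rep_add rep_scale by simp
  next
    fix g assume "g \<in> {br L a b | a b. True}"
    then obtain a b where g: "g = br L a b" by blast
    obtain k r where "rep a k" "rep b r" using rep_exists by blast
    then have "\<theta> g = br K k r" "rep g (br K k r)"
      using compatible rep_br unfolding g rep_def by metis+
    then show "g \<in> derived L \<and> rep g (\<theta> g)" using g L.br_in_derived by simp
  qed
  then show ?thesis by simp
qed

lemma graded_component_iso:
  assumes fd: "finite_dimensional_vector_space_pair (sc L) BL (sc K) BK"
    and parity: "(GL, GK) = (ev L, ev K) \<or> (GL, GK) = (od L, od K)"
    and dim: "L.dim GL = K.dim GK"
    and lin: "Vector_Spaces.linear (sc L) (sc K) \<theta>'" and ext: "\<And>x. x \<in> derived L \<Longrightarrow> \<theta>' x = \<theta> x"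
  obtains f where "Vector_Spaces.linear (sc L) (sc K) f" "f ` GL = GK" "inj_on f GL"
    "\<And>x. x \<in> GL \<Longrightarrow> rep x (f x)" "\<And>x. x \<in> derived L \<inter> GL \<Longrightarrow> f x = \<theta>' x"
proof -
  have sub: "L.subspace GL" "K.subspace GK"
    using parity L.ev_subspace L.od_subspace K.ev_subspace K.od_subspace by auto
  have total: "\<exists>u\<in>GK. rep x u" if "x \<in> GL" for x using parity that rep_ev rep_od by auto
  have surj: "\<exists>x\<in>GL. rep x u" if "u \<in> GK" for u
    using parity that rep_surj_ev rep_surj_od by auto
  have graded: "\<theta> x \<in> GK" if "x \<in> derived L \<inter> GL" for x
    using parity that derived_iso_ev derived_iso_od by auto
  interpret quotient_iso_on_reps "sc L" BL "sc K" BK GL "center L \<inter> GL" GK "center K \<inter> GK" rep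
  proof (intro quotient_iso_on_reps.intro[OF fd] quotient_iso_on_reps_axioms.intro)
    show "L.subspace (center L \<inter> GL)" by (rule L.subspace_inter[OF L.subspace_center sub(1)])
    fix x u u' assume "rep x u" "rep x u'" "u \<in> GK" "u' \<in> GK"
    then show "u' - u \<in> center K \<inter> GK"
      using rep_iff_center K.subspace_neg[OF K.subspace_center] K.subspace_diff[OF sub(2)]
      by (metis IntI minus_diff_eq)
  next
    fix x u z assume "rep x u" "z \<in> center K \<inter> GK"
    then show "rep x (u + z)"
      using rep_iff_center[of x u "u + z"] K.subspace_neg[OF K.subspace_center, of z] by simp
  qed (use sub dim rep_add rep_scale rep_zero_iff total surj in auto)
  obtain f where "Vector_Spaces.linear (sc L) (sc K) f" "f ` GL = GK" "inj_on f GL"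
    "\<And>x. x \<in> GL \<Longrightarrow> rep x (f x)" "\<And>x. x \<in> derived L \<inter> GL \<Longrightarrow> f x = \<theta>' x"
  proof (rule extends_to_isomorphism[of "derived L \<inter> GL" \<theta>'])
    show "L.subspace (derived L \<inter> GL)" by (rule L.subspace_inter[OF L.subspace_derived sub(1)])
    show "inj_on \<theta>' (derived L \<inter> GL)"
      using inj_on_subset[OF derived_iso_inj] ext inj_on_cong by (metis IntD1 inf_le1)
    show "\<theta>' x \<in> GK \<and> rep x (\<theta>' x)" if "x \<in> derived L \<inter> GL" for x
      using that graded ext rep_derived by simp
  qed (use lin in auto)
  then show ?thesis using that by blast
qed


lemma isomorphic_if_sdim_eq:
  assumes "fin_dim L" "fin_dim K" "sdim L = sdim K"
  shows "L \<cong>\<^sub>L K"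
proof -
  obtain BL where "finite_dimensional_vector_space (sc L) BL"
    using L.finite_dimensional_if_fin_dim[OF assms(1)] .
  moreover obtain BK where "finite_dimensional_vector_space (sc K) BK"
    using K.finite_dimensional_if_fin_dim[OF assms(2)] .
  ultimately have fd: "finite_dimensional_vector_space_pair (sc L) BL (sc K) BK"
    by (simp add: finite_dimensional_vector_space_pair_def)
  obtain \<theta>' where \<theta>': "Vector_Spaces.linear (sc L) (sc K) \<theta>'" "\<And>x. x \<in> derived L \<Longrightarrow> \<theta>' x = \<theta> x"
    using linear_extension_from_subspace[OF L.subspace_derived derived_iso_add derived_iso_scale]
    by blast
  have dims: "L.dim (ev L) = K.dim (ev K)" "L.dim (od L) = K.dim (od K)"
    using assms(3) unfolding sdim_def by simp_all
  obtain fe where fe: "Vector_Spaces.linear (sc L) (sc K) fe" "fe ` ev L = ev K" "inj_on fe (ev L)"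
    "\<And>x. x \<in> ev L \<Longrightarrow> rep x (fe x)" "\<And>x. x \<in> derived L \<inter> ev L \<Longrightarrow> fe x = \<theta>' x"
    using graded_component_iso[OF fd _ dims(1) \<theta>'] by blast
  obtain fo where fo: "Vector_Spaces.linear (sc L) (sc K) fo" "fo ` od L = od K" "inj_on fo (od L)"
    "\<And>x. x \<in> od L \<Longrightarrow> rep x (fo x)" "\<And>x. x \<in> derived L \<inter> od L \<Longrightarrow> fo x = \<theta>' x"
    using graded_component_iso[OF fd _ dims(2) \<theta>'] by blast
  obtain F where F: "Vector_Spaces.linear (sc L) (sc K) F" "bij F"
    "\<And>x. x \<in> ev L \<Longrightarrow> F x = fe x" "\<And>x. x \<in> od L \<Longrightarrow> F x = fo x"
    using graded_map_exists[OF fe(1-3) fo(1-3)] by blast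
  have rep_F: "rep x (F x)" for x
  proof -
    obtain a b where "a \<in> ev L" "b \<in> od L" "x = a + b" using L.ev_od_decomp .
    then show ?thesis using rep_add fe(4) fo(4) F(3,4) linear_add[OF F(1)] by simp
  qed
  have F_derived: "F x = \<theta> x" if x: "x \<in> derived L" for x
  proof -
    obtain a b where "a \<in> derived L \<inter> ev L" "b \<in> derived L \<inter> od L" "x = a + b"
      using L.derived_graded[OF x] .
    then show ?thesis
      using F(3,4) fe(5) fo(5) linear_add[OF F(1)] linear_add[OF \<theta>'(1)] \<theta>'(2)[OF x] by simp
  qed
  have "F (br L x y) = br K (F x) (F y)" for x y
    using F_derived[OF L.br_in_derived] compatible rep_F unfolding rep_def by metis
  moreover have "F ` ev L \<subseteq> ev K" "F ` od L \<subseteq> od K" using F(3,4) fe(2) fo(2) by auto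
  ultimately have "lsa_iso L K F" unfolding lsa_iso_def using F(1,2) by blast
  then show ?thesis unfolding lsa_isomorphic_def by blast
qed

end

theorem theorem3p8:
  fixes L :: "('k::field, 'a::ab_group_add) lsa"
    and K :: "('k, 'b::ab_group_add) lsa"
  assumes "(2::'k) \<noteq> 0" and "(3::'k) \<noteq> 0"
    and "lie_superalgebra L" and "lie_superalgebra K"
    and "fin_dim L" and "fin_dim K"
    and "sdim L = sdim K"
  shows "isoclinic L K \<longleftrightarrow> L \<cong>\<^sub>L K"
proof
  have pair: "lie_superalg_pair L K"
    using assms(3,4) by (simp add: lie_superalg_pair_def lie_superalg_def)
  show "isoclinic L K \<Longrightarrow> L \<cong>\<^sub>L K"
    using isoclinism.isomorphic_if_sdim_eq[OF isoclinism.intro[OF pair isoclinism_axioms.intro] assms(5-7)]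
    unfolding isoclinic_def by blast
  show "L \<cong>\<^sub>L K \<Longrightarrow> isoclinic L K" by (rule lie_superalg_pair.isoclinic_if_isomorphic[OF pair])
qed

end
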